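(* Let $X\sim\mathrm{TDL}(a,b,c,d)$ with admissible parameters, $a\neq0$ and $c\in(0,1)$, and let $\mu=E[X]$, $\sigma^2=\mathrm{Var}[X]$, $D=\sigma^2/\mu$. Then $$m_3:=E[(X-\mu)^3]=\frac{\sigma^4}{\mu}+d\mu\sigma^2+\frac{c(1-a)\mu}{(1-c)^2},$$ $$m_4:=E[(X-\mu)^4]=3(2d+1)\sigma^4+\frac{\big(4c(1-a)+(1-ac)^2\big)\sigma^2}{(1-c)^2}+\frac{c^2(1-a^2)\mu}{(1-c)^3}.$$ Consequently the skewness and kurtosis are $$\frac{m_3}{\sigma^3}=\frac{D}{\sigma}+\frac{d\sigma}{D}+\frac{c(1-a)}{(1-c)^2\sigma D},\qquad \frac{m_4}{\sigma^4}=3(2d+1)+\frac{4c(1-a)+(1-ac)^2}{(1-c)^2\sigma^2}+\frac{c^2(1-a^2)}{(1-c)^3\sigma^2 D}.$$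
   Context: $\operatorname{sgn}$ is the sign function with $\operatorname{sgn}(0)=0$. Tempered Discrete Linnik law $\mathrm{TDL}(a,b,c,d)$: the law on $\mathbb{N}$ with probability generating function $g(s)=\big(1+\operatorname{sgn}(a)\,b\,d\,((1-cs)^a-(1-c)^a)\big)^{-1/d}$, $s\in[0,1]$, with admissible parameters $d>0$, $b>0$, and either $a\le0$, $c\in[0,1)$, or $a\in(0,1]$, $c\in[0,1]$. Under the stated hypotheses $\mu=|a|\,b\,c\,(1-c)^{a-1}>0$. *)

theory Defs
  imports "HOL-Probability.Probability"
begin

definition TDL_pgf :: "real \<Rightarrow> real \<Rightarrow> real \<Rightarrow> real \<Rightarrow> real \<Rightarrow> real" where
  "TDL_pgf a b c d s =
     (1 + sgn a * b * d * ((1 - c * s) powr a - (1 - c) powr a)) powr (- 1 / d)"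

definition TDL_admissible :: "real \<Rightarrow> real \<Rightarrow> real \<Rightarrow> real \<Rightarrow> bool" where
  "TDL_admissible a b c d \<longleftrightarrow> d > 0 \<and> b > 0 \<and>
     ((a \<le> 0 \<and> 0 \<le> c \<and> c < 1) \<or> (0 < a \<and> a \<le> 1 \<and> 0 \<le> c \<and> c \<le> 1))"

definition is_TDL :: "nat pmf \<Rightarrow> real \<Rightarrow> real \<Rightarrow> real \<Rightarrow> real \<Rightarrow> bool" where
  "is_TDL P a b c d \<longleftrightarrow>
     (\<forall>s\<in>{0..1}. measure_pmf.expectation P (\<lambda>k. s ^ k) = TDL_pgf a b c d s)"

end

theory Submission
  imports Defs
begin

text \<open>The pgf of \<open>X\<close> is \<open>G = \<phi> powr (-1/d)\<close> with
  \<open>\<phi> s = 1 + sgn a b d ((1 - c s) powr a - (1 - c) powr a)\<close>. Since \<open>G\<close> has nonnegative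
  coefficients, Abel's theorem identifies the factorial moment \<open>E[X (X - 1) \<cdots> (X - k + 1)]\<close> with
  the \<open>k\<close>-th derivative of \<open>G\<close> at \<open>1\<close>, which Faa di Bruno's formula computes from \<open>\<phi> 1 = 1\<close>
  and the \<open>k\<close>-th derivative \<open>sgn a b d (1 - c) powr a a (a - 1) \<cdots> (a - k + 1) (- c / (1 - c)) ^ k\<close>
  of \<open>\<phi>\<close> at \<open>1\<close>. Passing to raw and then central moments, both formulas become polynomial
  identities in \<open>1/d\<close>, \<open>|a| b d (1 - c) powr a\<close> and the odds \<open>c / (1 - c)\<close>.\<close>

lemma integrable_pmf_nat_iff:
  fixes P :: "nat pmf" and f :: "nat \<Rightarrow> real"
  shows "integrable (measure_pmf P) f \<longleftrightarrow> summable (\<lambda>k. \<bar>pmf P k * f k\<bar>)"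
  by (simp add: measure_pmf_eq_density integrable_density integrable_count_space_nat_iff)

lemma sums_expectation_pmf_nat:
  fixes P :: "nat pmf" and f :: "nat \<Rightarrow> real"
  assumes "integrable (measure_pmf P) f"
  shows "(\<lambda>k. pmf P k * f k) sums measure_pmf.expectation P f"
proof -
  have "integrable (count_space UNIV) (\<lambda>k. pmf P k * f k)"
    using assms by (simp add: integrable_pmf_nat_iff integrable_count_space_nat_iff)
  moreover have "measure_pmf.expectation P f = integral\<^sup>L (count_space UNIV) (\<lambda>k. pmf P k * f k)"
    by (simp add: measure_pmf_eq_density integral_density)
  ultimately show ?thesis
    by (simp add: sums_integral_count_space_nat)
qed

lemma integrable_expectation_pmf_nat_of_sums:
  fixes P :: "nat pmf" and f :: "nat \<Rightarrow> real"
  assumes "(\<lambda>k. pmf P k * f k) sums v" and "\<And>k. 0 \<le> f k"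
  shows "integrable (measure_pmf P) f" and "measure_pmf.expectation P f = v"
proof -
  show int: "integrable (measure_pmf P) f"
    using assms by (simp add: integrable_pmf_nat_iff abs_mult sums_iff)
  show "measure_pmf.expectation P f = v"
    using sums_unique2[OF sums_expectation_pmf_nat[OF int] assms(1)] .
qed

text \<open>Abel's theorem in the case of nonnegative coefficients, where the limit at \<open>1\<close> also forces
  convergence of \<open>\<Sum> p n\<close>.\<close>
lemma nonneg_power_series_sums_at_1:
  fixes p :: "nat \<Rightarrow> real" and g :: "real \<Rightarrow> real"
  assumes nonneg: "\<And>n. 0 \<le> p n"
    and series: "\<And>s. s \<in> {0<..<1} \<Longrightarrow> (\<lambda>n. p n * s ^ n) sums g s"
    and lim: "(g \<longlongrightarrow> g 1) (at_left 1)"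
  shows "p sums g 1"
proof -
  have ev: "eventually (\<lambda>s. s \<in> {0<..<1}) (at_left (1::real))"
    by (rule eventually_at_left_real) simp
  have partial_le: "(\<Sum>i<N. p i) \<le> g 1" for N
  proof -
    have "eventually (\<lambda>s. (\<Sum>i<N. p i * s ^ i) \<le> g s) (at_left (1::real))"
      using ev
    proof eventually_elim
      case (elim s)
      then show ?case
        using sum_le_suminf[OF sums_summable[OF series[OF elim]], of "{..<N}"] nonneg elim
        by (auto simp: sums_unique[OF series[OF elim], symmetric])
    qed
    moreover have "((\<lambda>s. \<Sum>i<N. p i * s ^ i) \<longlongrightarrow> (\<Sum>i<N. p i * 1 ^ i)) (at_left 1)"
      by (intro tendsto_intros)
    ultimately show ?thesis
      using tendsto_le[OF _ lim] by simp
  qed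
  have summable: "summable p"
    by (rule summableI_nonneg_bounded[OF nonneg partial_le])
  have "eventually (\<lambda>s. g s \<le> suminf p) (at_left (1::real))"
    using ev
  proof eventually_elim
    case (elim s)
    have "(\<Sum>n. p n * s ^ n) \<le> suminf p"
      using elim nonneg
      by (intro suminf_le sums_summable[OF series[OF elim]] summable)
         (auto intro!: mult_left_le power_le_one)
    then show ?case
      using sums_unique[OF series[OF elim]] by simp
  qed
  then have "g 1 \<le> suminf p"
    using tendsto_le[OF _ tendsto_const lim] by simp
  with summable suminf_le_const[OF summable partial_le] show ?thesis
    by (simp add: summable_sums_iff)
qed

lemma diffs_iterate_eq:
  fixes p :: "nat \<Rightarrow> real"
  shows "(diffs ^^ j) p n = p (n + j) * pochhammer (real n + 1) j"
proof (induction j arbitrary: n)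
  case (Suc j)
  then show ?case
    by (simp add: diffs_def pochhammer_rec algebra_simps)
qed simp

lemma diffs_iterate_sums_iff:
  fixes p :: "nat \<Rightarrow> real"
  shows "(diffs ^^ j) p sums S \<longleftrightarrow> (\<lambda>m. p m * pochhammer (real m - real j + 1) j) sums S"
proof -
  have vanish: "pochhammer (real i - real j + 1) j = 0" if "i < j" for i
    using that by (subst pochhammer_eq_0_iff) (auto intro!: exI[of _ "j - 1 - i"])
  have "(diffs ^^ j) p = (\<lambda>i. p (i + j) * pochhammer (real (i + j) - real j + 1) j)"
    by (simp add: fun_eq_iff diffs_iterate_eq add.commute)
  then show ?thesis
    using sums_iff_shift[of "\<lambda>m. p m * pochhammer (real m - real j + 1) j" j S] vanish
    by simp
qed

lemma pgf_factorial_moment_sums: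
  fixes P :: "nat pmf" and G :: "nat \<Rightarrow> real \<Rightarrow> real"
  assumes pgf: "\<And>s. s \<in> {0<..<1} \<Longrightarrow> measure_pmf.expectation P (\<lambda>k. s ^ k) = G 0 s"
    and deriv: "\<And>j s. j < n \<Longrightarrow> s \<in> {0<..<1} \<Longrightarrow> (G j has_field_derivative G (Suc j) s) (at s)"
    and lim: "(G n \<longlongrightarrow> G n 1) (at_left 1)"
  shows "(\<lambda>k. pmf P k * pochhammer (real k - real n + 1) n) sums G n 1"
proof -
  define p where "p = pmf P"
  have summable: "summable (\<lambda>k. (diffs ^^ j) p k * s ^ k)" if "\<bar>s\<bar> < 1" for j s
    using that
  proof (induction j arbitrary: s)
    case 0
    have "summable (\<lambda>k. p k)"
      using sums_expectation_pmf_nat[of P "\<lambda>_. 1"] by (auto simp: p_def sums_iff)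
    then show ?case
      by (rule summable_comparison_test')
         (use 0 in \<open>auto simp: p_def abs_mult power_abs intro!: mult_left_le power_le_one\<close>)
  next
    case (Suc j)
    then show ?case
      using termdiff_converges[of s 1 "(diffs ^^ j) p"] by simp
  qed
  have series: "(\<lambda>k. (diffs ^^ j) p k * s ^ k) sums G j s" if "j \<le> n" "s \<in> {0<..<1}" for j s
    using that
  proof (induction j arbitrary: s)
    case 0
    have "integrable (measure_pmf P) (\<lambda>k. s ^ k)"
      using 0 by (intro measure_pmf.integrable_const_bound[of _ 1]) (auto intro!: power_le_one)
    from sums_expectation_pmf_nat[OF this] show ?case
      by (simp add: pgf[OF 0(2)] p_def)
  next
    case (Suc j)
    let ?F = "\<lambda>j s. \<Sum>k. (diffs ^^ j) p k * s ^ k"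
    have der: "(?F j has_field_derivative ?F (Suc j) s) (at s)"
      using termdiffs_strong'[of 1 "(diffs ^^ j) p" s] summable Suc.prems by simp
    have eq: "?F j x = G j x" if "x \<in> {0<..<1}" for x
      using Suc.IH[of x] Suc.prems(1) that by (simp add: sums_iff)
    have "(G j has_field_derivative ?F (Suc j) s) (at s)"
      by (rule has_field_derivative_transform_within_open[OF der open_greaterThanLessThan _ eq])
         (use Suc.prems in auto)
    moreover have "(G j has_field_derivative G (Suc j) s) (at s)"
      using deriv Suc.prems by simp
    ultimately have "?F (Suc j) s = G (Suc j) s"
      by (rule DERIV_unique)
    then show ?case
      using summable[of s "Suc j"] Suc.prems by (simp add: sums_iff)
  qed
  have "(diffs ^^ n) p sums G n 1"
    by (rule nonneg_power_series_sums_at_1[OF _ series[OF order.refl] lim])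
       (simp add: diffs_iterate_eq p_def pochhammer_nonneg)
  then show ?thesis
    unfolding diffs_iterate_sums_iff p_def .
qed

text \<open>Faa di Bruno's formula: if \<open>h i\<close> is the \<open>i\<close>-th derivative of \<open>f\<close> at a point, then
  \<open>powr_higher_deriv r h k\<close> is the \<open>k\<close>-th derivative of \<open>f powr r\<close> there, for \<open>k \<le> 4\<close>
  (the value \<open>0\<close> for \<open>k > 4\<close> is junk).\<close>
definition powr_higher_deriv :: "real \<Rightarrow> (nat \<Rightarrow> real) \<Rightarrow> nat \<Rightarrow> real" where
  "powr_higher_deriv r h k =
    (if k = 0 then h 0 powr r
     else if k = 1 then r * h 0 powr (r - 1) * h 1
     else if k = 2 then r * (r - 1) * h 0 powr (r - 2) * h 1 ^ 2 + r * h 0 powr (r - 1) * h 2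
     else if k = 3 then r * (r - 1) * (r - 2) * h 0 powr (r - 3) * h 1 ^ 3
       + 3 * r * (r - 1) * h 0 powr (r - 2) * h 1 * h 2 + r * h 0 powr (r - 1) * h 3
     else if k = 4 then r * (r - 1) * (r - 2) * (r - 3) * h 0 powr (r - 4) * h 1 ^ 4
       + 6 * r * (r - 1) * (r - 2) * h 0 powr (r - 3) * h 1 ^ 2 * h 2
       + 3 * r * (r - 1) * h 0 powr (r - 2) * h 2 ^ 2
       + 4 * r * (r - 1) * h 0 powr (r - 2) * h 1 * h 3 + r * h 0 powr (r - 1) * h 4
     else 0)"

lemma powr_higher_deriv_simps:
  "powr_higher_deriv r h 0 = h 0 powr r"
  "powr_higher_deriv r h 1 = r * h 0 powr (r - 1) * h 1"
  "powr_higher_deriv r h 2 = r * (r - 1) * h 0 powr (r - 2) * h 1 ^ 2 + r * h 0 powr (r - 1) * h 2"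
  "powr_higher_deriv r h 3 = r * (r - 1) * (r - 2) * h 0 powr (r - 3) * h 1 ^ 3
       + 3 * r * (r - 1) * h 0 powr (r - 2) * h 1 * h 2 + r * h 0 powr (r - 1) * h 3"
  "powr_higher_deriv r h 4 = r * (r - 1) * (r - 2) * (r - 3) * h 0 powr (r - 4) * h 1 ^ 4
       + 6 * r * (r - 1) * (r - 2) * h 0 powr (r - 3) * h 1 ^ 2 * h 2
       + 3 * r * (r - 1) * h 0 powr (r - 2) * h 2 ^ 2
       + 4 * r * (r - 1) * h 0 powr (r - 2) * h 1 * h 3 + r * h 0 powr (r - 1) * h 4"
  by (simp_all add: powr_higher_deriv_def)

lemma has_field_derivative_powr_higher_deriv:
  fixes H :: "nat \<Rightarrow> real \<Rightarrow> real"
  assumes "k < 4" and pos: "0 < H 0 s"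
    and deriv: "\<And>i. i < 4 \<Longrightarrow> (H i has_field_derivative H (Suc i) s) (at s)"
  shows "((\<lambda>s. powr_higher_deriv r (\<lambda>i. H i s) k) has_field_derivative
           powr_higher_deriv r (\<lambda>i. H i s) (Suc k)) (at s)"
proof -
  have powr: "((\<lambda>s. H 0 s powr (r - q)) has_field_derivative
                (r - q) * H 0 s powr (r - (q + 1)) * H 1 s) (at s)" for q
    using DERIV_fun_powr[OF deriv[of 0] pos, of "r - q"] by (simp add: algebra_simps)
  note powr_intros = powr[of 0, simplified] powr[of 1, simplified] powr[of 2, simplified]
    powr[of 3, simplified]
  have H1: "(H 1 has_field_derivative H 2 s) (at s)"
    using deriv[of 1] by (simp add: eval_nat_numeral)
  have H2: "(H 2 has_field_derivative H 3 s) (at s)"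
    using deriv[of 2] by (simp add: eval_nat_numeral)
  have H3: "(H 3 has_field_derivative H 4 s) (at s)"
    using deriv[of 3] by (simp add: eval_nat_numeral)
  have Suc_numerals: "Suc 2 = 3" "Suc 3 = 4"
    by simp_all
  consider "k = 0" | "k = 1" | "k = 2" | "k = 3"
    using \<open>k < 4\<close> by linarith
  then show ?thesis
  proof cases
    case 1
    show ?thesis
      using powr[of 0] by (simp add: 1 powr_higher_deriv_def)
  next
    case 2
    show ?thesis unfolding 2 Suc_1 powr_higher_deriv_simps
      by (rule powr_intros derivative_eq_intros H1 refl)+
         (simp add: algebra_simps power2_eq_square)
  next
    case 3
    show ?thesis unfolding 3 Suc_numerals powr_higher_deriv_simps
      by (rule powr_intros derivative_eq_intros H1 H2 refl)+
         (simp add: algebra_simps power2_eq_square power3_eq_cube)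
  next
    case 4
    show ?thesis unfolding 4 Suc_numerals powr_higher_deriv_simps
      by (rule powr_intros derivative_eq_intros H1 H2 H3 refl)+
         (simp add: algebra_simps power2_eq_square power3_eq_cube eval_nat_numeral)
  qed
qed

lemma isCont_powr_higher_deriv:
  fixes H :: "nat \<Rightarrow> real \<Rightarrow> real"
  assumes "0 < H 0 s" and "\<And>i. i \<le> k \<Longrightarrow> isCont (H i) s"
  shows "isCont (\<lambda>s. powr_higher_deriv r (\<lambda>i. H i s) k) s"
proof -
  have powr: "isCont (\<lambda>s. H 0 s powr q) s" for q
    using assms by (intro continuous_intros) auto
  consider "k = 0" | "k = 1" | "k = 2" | "k = 3" | "k = 4" | "k > 4"
    by linarith
  then show ?thesis
    by cases (auto intro!: continuous_intros powr assms(2) simp: powr_higher_deriv_def)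
qed

lemma has_field_derivative_falling_powr:
  fixes a c s :: real
  assumes "0 < 1 - c * s"
  shows "((\<lambda>s. pochhammer (a - real k + 1) k * (- c) ^ k * (1 - c * s) powr (a - real k))
          has_field_derivative
          pochhammer (a - real (Suc k) + 1) (Suc k) * (- c) ^ Suc k
            * (1 - c * s) powr (a - real (Suc k))) (at s)"
proof -
  have "((\<lambda>s. (1 - c * s) powr (a - real k)) has_field_derivative
          (a - real k) * (1 - c * s) powr (a - real k - 1) * (- c)) (at s)"
    using DERIV_fun_powr[of "\<lambda>s. 1 - c * s" "- c" s "a - real k"] assms
    by (auto intro!: derivative_eq_intros)
  then have der: "((\<lambda>s. pochhammer (a - real k + 1) k * (- c) ^ k * (1 - c * s) powr (a - real k))
      has_field_derivative pochhammer (a - real k + 1) k * (- c) ^ k *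
        ((a - real k) * (1 - c * s) powr (a - real k - 1) * (- c))) (at s)"
    by (rule DERIV_cmult)
  have poch: "pochhammer (a - real (Suc k) + 1) (Suc k)
      = (a - real k) * pochhammer (a - real k + 1) k"
    by (simp add: pochhammer_rec algebra_simps)
  from der show ?thesis
    by (rule DERIV_cong) (unfold poch, simp add: algebra_simps)
qed

text \<open>The \<open>k\<close>-th derivative of the base of the TDL pgf; \<open>pochhammer (a - k + 1) k\<close> is the
  falling factorial \<open>a (a - 1) \<cdots> (a - k + 1)\<close>.\<close>
definition TDL_base_deriv :: "real \<Rightarrow> real \<Rightarrow> real \<Rightarrow> real \<Rightarrow> nat \<Rightarrow> real \<Rightarrow> real" where
  "TDL_base_deriv a b c d k s =
    (if k = 0 then 1 + sgn a * b * d * ((1 - c * s) powr a - (1 - c) powr a)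
     else sgn a * b * d * pochhammer (a - real k + 1) k * (- c) ^ k
       * (1 - c * s) powr (a - real k))"

lemma TDL_pgf_eq_base_powr: "TDL_pgf a b c d s = TDL_base_deriv a b c d 0 s powr (- 1 / d)"
  by (simp add: TDL_pgf_def TDL_base_deriv_def)

lemma has_field_derivative_TDL_base_deriv:
  assumes "0 < 1 - c * s"
  shows "(TDL_base_deriv a b c d k has_field_derivative TDL_base_deriv a b c d (Suc k) s) (at s)"
proof -
  have "TDL_base_deriv a b c d k
      = (\<lambda>s. (if k = 0 then 1 - sgn a * b * d * (1 - c) powr a else 0)
          + sgn a * b * d * (pochhammer (a - real k + 1) k * (- c) ^ k * (1 - c * s) powr (a - real k)))"
    by (auto simp: fun_eq_iff TDL_base_deriv_def algebra_simps)
  moreover have "TDL_base_deriv a b c d (Suc k) s = 0 + sgn a * b * d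
      * (pochhammer (a - real (Suc k) + 1) (Suc k) * (- c) ^ Suc k
        * (1 - c * s) powr (a - real (Suc k)))"
    by (simp add: TDL_base_deriv_def)
  ultimately show ?thesis
    using has_field_derivative_falling_powr[OF assms, of a k]
    by (simp only:) (intro DERIV_add DERIV_const DERIV_cmult)
qed

lemma TDL_base_ge_1:
  assumes "TDL_admissible a b c d" and "0 \<le> s" "s \<le> 1"
  shows "1 \<le> TDL_base_deriv a b c d 0 s"
proof -
  have bd: "0 < b * d" and c: "0 \<le> c" "c \<le> 1"
    using assms(1) by (auto simp: TDL_admissible_def)
  have cs: "1 - c \<le> 1 - c * s"
    using c assms(3) by (simp add: mult_left_le)
  consider "0 < a" | "a = 0" | "a < 0" "c < 1"
    using assms(1) by (force simp: TDL_admissible_def)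
  then show ?thesis
  proof cases
    case 1
    then have "(1 - c) powr a \<le> (1 - c * s) powr a"
      using cs c by (intro powr_mono2) auto
    with 1 bd show ?thesis
      by (simp add: TDL_base_deriv_def)
  next
    case 2
    then show ?thesis
      by (simp add: TDL_base_deriv_def)
  next
    case 3
    then have "(1 - c * s) powr a \<le> (1 - c) powr a"
      using cs by (intro powr_mono2') auto
    with 3 bd show ?thesis
      by (simp add: TDL_base_deriv_def mult_nonneg_nonpos)
  qed
qed

lemma TDL_base_deriv_at_1:
  assumes "c < 1" and "0 < k"
  shows "TDL_base_deriv a b c d k 1
    = sgn a * b * d * (1 - c) powr a * pochhammer (a - real k + 1) k * (- (c / (1 - c))) ^ k"
proof -
  have "(1 - c) powr (a - real k) = (1 - c) powr a / (1 - c) ^ k"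
    using assms by (simp add: powr_diff powr_realpow)
  moreover have "(- (c / (1 - c))) ^ k = (- c) ^ k / (1 - c) ^ k"
    by (simp only: minus_divide_left power_divide)
  ultimately show ?thesis
    using assms by (simp add: TDL_base_deriv_def)
qed

lemma TDL_factorial_moment_sums:
  assumes adm: "TDL_admissible a b c d" and law: "is_TDL P a b c d" and "c < 1" and "k \<le> 4"
  shows "(\<lambda>m. pmf P m * pochhammer (real m - real k + 1) k)
           sums powr_higher_deriv (- 1 / d) (\<lambda>i. TDL_base_deriv a b c d i 1) k"
proof -
  let ?H = "TDL_base_deriv a b c d"
  let ?G = "\<lambda>j s. powr_higher_deriv (- 1 / d) (\<lambda>i. ?H i s) j"
  have c: "0 \<le> c" using adm by (auto simp: TDL_admissible_def)
  have pos: "0 < 1 - c * s" "0 < ?H 0 s" if "0 \<le> s" "s \<le> 1" for s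
    using TDL_base_ge_1[OF adm that] mult_left_le[OF that(2) c] \<open>c < 1\<close> by auto
  show ?thesis
  proof (rule pgf_factorial_moment_sums[of P ?G])
    show "measure_pmf.expectation P (\<lambda>k. s ^ k) = ?G 0 s" if "s \<in> {0<..<1}" for s
      using law that by (simp add: is_TDL_def TDL_pgf_eq_base_powr powr_higher_deriv_def)
    show "(?G j has_field_derivative ?G (Suc j) s) (at s)" if "j < k" "s \<in> {0<..<1}" for j s
      using that \<open>k \<le> 4\<close> pos[of s]
      by (intro has_field_derivative_powr_higher_deriv has_field_derivative_TDL_base_deriv) auto
    have "isCont (?H i) 1" for i
      using pos[of 1] by (intro DERIV_isCont[OF has_field_derivative_TDL_base_deriv]) auto
    then have "isCont (?G k) 1"
      using pos[of 1] by (intro isCont_powr_higher_deriv) auto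
    then show "(?G k \<longlongrightarrow> ?G k 1) (at_left 1)"
      by (simp add: isCont_def filterlim_at_split)
  qed
qed

text \<open>The coefficients are Stirling numbers of the second kind.\<close>
lemma pmf_nat_power_moment_sums:
  fixes P :: "nat pmf" and g :: "nat \<Rightarrow> real"
  assumes fact: "\<And>k. 1 \<le> k \<Longrightarrow> k \<le> 4 \<Longrightarrow> (\<lambda>m. pmf P m * pochhammer (real m - real k + 1) k) sums g k"
  shows "(\<lambda>m. pmf P m * real m) sums g 1"
    and "(\<lambda>m. pmf P m * real m ^ 2) sums (g 2 + g 1)"
    and "(\<lambda>m. pmf P m * real m ^ 3) sums (g 3 + 3 * g 2 + g 1)"
    and "(\<lambda>m. pmf P m * real m ^ 4) sums (g 4 + 6 * g 3 + 7 * g 2 + g 1)"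
proof -
  have F1: "(\<lambda>m. pmf P m * real m) sums g 1"
    using fact[of 1] by simp
  have F2: "(\<lambda>m. pmf P m * (real m * (real m - 1))) sums g 2"
    using fact[of 2] by (simp add: eval_nat_numeral pochhammer_Suc algebra_simps)
  have F3: "(\<lambda>m. pmf P m * (real m * (real m - 1) * (real m - 2))) sums g 3"
    using fact[of 3] by (simp add: eval_nat_numeral pochhammer_Suc algebra_simps)
  have F4: "(\<lambda>m. pmf P m * (real m * (real m - 1) * (real m - 2) * (real m - 3))) sums g 4"
    using fact[of 4] by (simp add: eval_nat_numeral pochhammer_Suc algebra_simps)
  show "(\<lambda>m. pmf P m * real m) sums g 1"
    by (fact F1)
  show "(\<lambda>m. pmf P m * real m ^ 2) sums (g 2 + g 1)"
    using sums_add[OF F2 F1] by (simp add: algebra_simps power2_eq_square)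
  show "(\<lambda>m. pmf P m * real m ^ 3) sums (g 3 + 3 * g 2 + g 1)"
    using sums_add[OF sums_add[OF F3 sums_mult[OF F2, of 3]] F1]
    by (simp add: algebra_simps power3_eq_cube)
  show "(\<lambda>m. pmf P m * real m ^ 4) sums (g 4 + 6 * g 3 + 7 * g 2 + g 1)"
    using sums_add[OF sums_add[OF sums_add[OF F4 sums_mult[OF F3, of 6]]
        sums_mult[OF F2, of 7]] F1]
    by (simp add: algebra_simps eval_nat_numeral)
qed

lemma (in prob_space) central_moment_3_eq:
  fixes X :: "'a \<Rightarrow> real"
  assumes "integrable M X" "integrable M (\<lambda>x. X x ^ 2)" "integrable M (\<lambda>x. X x ^ 3)"
  shows "expectation (\<lambda>x. (X x - expectation X) ^ 3)
    = expectation (\<lambda>x. X x ^ 3) - 3 * expectation X * expectation (\<lambda>x. X x ^ 2)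
      + 2 * expectation X ^ 3"
proof -
  define \<mu> where "\<mu> = expectation X"
  have "expectation (\<lambda>x. (X x - \<mu>) ^ 3)
      = expectation (\<lambda>x. X x ^ 3 - 3 * \<mu> * X x ^ 2 + 3 * \<mu> ^ 2 * X x - \<mu> ^ 3)"
    by (intro Bochner_Integration.integral_cong)
       (simp_all add: power2_eq_square power3_eq_cube algebra_simps)
  also have "\<dots> = expectation (\<lambda>x. X x ^ 3) - 3 * \<mu> * expectation (\<lambda>x. X x ^ 2)
      + 3 * \<mu> ^ 2 * \<mu> - \<mu> ^ 3"
    using assms by (simp add: \<mu>_def prob_space)
  finally show ?thesis
    by (simp add: \<mu>_def power3_eq_cube power2_eq_square)
qed

lemma (in prob_space) central_moment_4_eq:
  fixes X :: "'a \<Rightarrow> real"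
  assumes "integrable M X" "integrable M (\<lambda>x. X x ^ 2)" "integrable M (\<lambda>x. X x ^ 3)"
    "integrable M (\<lambda>x. X x ^ 4)"
  shows "expectation (\<lambda>x. (X x - expectation X) ^ 4)
    = expectation (\<lambda>x. X x ^ 4) - 4 * expectation X * expectation (\<lambda>x. X x ^ 3)
      + 6 * expectation X ^ 2 * expectation (\<lambda>x. X x ^ 2) - 3 * expectation X ^ 4"
proof -
  define \<mu> where "\<mu> = expectation X"
  have "expectation (\<lambda>x. (X x - \<mu>) ^ 4)
      = expectation (\<lambda>x. X x ^ 4 - 4 * \<mu> * X x ^ 3 + 6 * \<mu> ^ 2 * X x ^ 2
          - 4 * \<mu> ^ 3 * X x + \<mu> ^ 4)"
    by (intro Bochner_Integration.integral_cong) (simp_all add: eval_nat_numeral algebra_simps)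
  also have "\<dots> = expectation (\<lambda>x. X x ^ 4) - 4 * \<mu> * expectation (\<lambda>x. X x ^ 3)
      + 6 * \<mu> ^ 2 * expectation (\<lambda>x. X x ^ 2) - 4 * \<mu> ^ 3 * \<mu> + \<mu> ^ 4"
    using assms by (simp add: \<mu>_def prob_space)
  finally show ?thesis
    by (simp add: \<mu>_def eval_nat_numeral)
qed

lemma pmf_nat_central_moments_of_factorial_moments:
  fixes P :: "nat pmf" and g :: "nat \<Rightarrow> real"
  assumes fact: "\<And>k. 1 \<le> k \<Longrightarrow> k \<le> 4 \<Longrightarrow> (\<lambda>m. pmf P m * pochhammer (real m - real k + 1) k) sums g k"
  defines "\<mu> \<equiv> g 1" and "E2 \<equiv> g 2 + g 1" and "E3 \<equiv> g 3 + 3 * g 2 + g 1"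
    and "E4 \<equiv> g 4 + 6 * g 3 + 7 * g 2 + g 1"
  shows "integrable (measure_pmf P) (\<lambda>k. real k ^ 4)"
    and "measure_pmf.expectation P real = \<mu>"
    and "measure_pmf.variance P real = E2 - \<mu> ^ 2"
    and "measure_pmf.expectation P (\<lambda>k. (real k - measure_pmf.expectation P real) ^ 3)
           = E3 - 3 * \<mu> * E2 + 2 * \<mu> ^ 3"
    and "measure_pmf.expectation P (\<lambda>k. (real k - measure_pmf.expectation P real) ^ 4)
           = E4 - 4 * \<mu> * E3 + 6 * \<mu> ^ 2 * E2 - 3 * \<mu> ^ 4"
proof -
  note raw = pmf_nat_power_moment_sums[OF fact]
  note M1 = integrable_expectation_pmf_nat_of_sums[OF raw(1)]
    and M2 = integrable_expectation_pmf_nat_of_sums[OF raw(2)]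
    and M3 = integrable_expectation_pmf_nat_of_sums[OF raw(3)]
    and M4 = integrable_expectation_pmf_nat_of_sums[OF raw(4)]
  show "integrable (measure_pmf P) (\<lambda>k. real k ^ 4)"
    using M4 by simp
  show "measure_pmf.expectation P real = \<mu>"
    using M1 by (simp add: \<mu>_def)
  show "measure_pmf.variance P real = E2 - \<mu> ^ 2"
    using M1 M2 by (subst measure_pmf.variance_eq) (simp_all add: \<mu>_def E2_def)
  show "measure_pmf.expectation P (\<lambda>k. (real k - measure_pmf.expectation P real) ^ 3)
           = E3 - 3 * \<mu> * E2 + 2 * \<mu> ^ 3"
    using M1 M2 M3
    by (subst measure_pmf.central_moment_3_eq) (simp_all add: \<mu>_def E2_def E3_def)
  show "measure_pmf.expectation P (\<lambda>k. (real k - measure_pmf.expectation P real) ^ 4)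
           = E4 - 4 * \<mu> * E3 + 6 * \<mu> ^ 2 * E2 - 3 * \<mu> ^ 4"
    using M1 M2 M3 M4
    by (subst measure_pmf.central_moment_4_eq) (simp_all add: \<mu>_def E2_def E3_def E4_def)
qed

text \<open>Here \<open>h i\<close> are the derivatives of the base \<open>\<phi>\<close> at \<open>1\<close>, with \<open>x = |a| b d (1 - c) powr a\<close> and
  \<open>y = c / (1 - c)\<close>.\<close>
lemma TDL_moment_identities_in_odds:
  fixes a d x y :: real and h :: "nat \<Rightarrow> real"
  assumes "0 < d" "0 < x" "0 < y" "a \<le> 1"
    and h: "h 0 = 1" "h 1 = - x * y" "h 2 = x * (a - 1) * y ^ 2"
      "h 3 = - x * (a - 1) * (a - 2) * y ^ 3" "h 4 = x * (a - 1) * (a - 2) * (a - 3) * y ^ 4"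
  defines "g \<equiv> powr_higher_deriv (- 1 / d) h"
  defines "\<mu> \<equiv> g 1" and "E2 \<equiv> g 2 + g 1" and "E3 \<equiv> g 3 + 3 * g 2 + g 1"
    and "E4 \<equiv> g 4 + 6 * g 3 + 7 * g 2 + g 1"
  defines "\<sigma>2 \<equiv> E2 - \<mu> ^ 2"
  shows "0 < \<mu>" and "0 < \<sigma>2"
    and "E3 - 3 * \<mu> * E2 + 2 * \<mu> ^ 3 = \<sigma>2 ^ 2 / \<mu> + d * \<mu> * \<sigma>2 + y * (1 + y) * (1 - a) * \<mu>"
    and "E4 - 4 * \<mu> * E3 + 6 * \<mu> ^ 2 * E2 - 3 * \<mu> ^ 4
      = 3 * (2 * d + 1) * \<sigma>2 ^ 2 + (4 * y * (1 + y) * (1 - a) + (1 + y - a * y) ^ 2) * \<sigma>2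
        + y ^ 2 * (1 + y) * (1 - a ^ 2) * \<mu>"
proof -
  have g: "g 1 = - 1 / d * h 1"
    "g 2 = - 1 / d * (- 1 / d - 1) * h 1 ^ 2 - 1 / d * h 2"
    "g 3 = - 1 / d * (- 1 / d - 1) * (- 1 / d - 2) * h 1 ^ 3
      + 3 * (- 1 / d) * (- 1 / d - 1) * h 1 * h 2 - 1 / d * h 3"
    "g 4 = - 1 / d * (- 1 / d - 1) * (- 1 / d - 2) * (- 1 / d - 3) * h 1 ^ 4
      + 6 * (- 1 / d) * (- 1 / d - 1) * (- 1 / d - 2) * h 1 ^ 2 * h 2
      + 3 * (- 1 / d) * (- 1 / d - 1) * h 2 ^ 2
      + 4 * (- 1 / d) * (- 1 / d - 1) * h 1 * h 3 - 1 / d * h 4"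
    unfolding g_def powr_higher_deriv_simps h(1) powr_one_eq_one by simp_all
  have \<mu>: "\<mu> = x * y / d"
    unfolding \<mu>_def g h by simp
  have \<sigma>2: "\<sigma>2 = x * y / d * (x * y + (1 - a) * y + 1)"
    unfolding \<sigma>2_def E2_def \<mu> g h using \<open>0 < d\<close>
    by (simp add: field_simps power2_eq_square)
  show "0 < \<mu>"
    using assms(1-3) by (simp add: \<mu>)
  have "0 < x * y + (1 - a) * y + 1"
    using assms(2-4) by (intro add_pos_pos add_pos_nonneg) auto
  then show "0 < \<sigma>2"
    using assms(1-3) by (simp add: \<sigma>2)
  show "E3 - 3 * \<mu> * E2 + 2 * \<mu> ^ 3 = \<sigma>2 ^ 2 / \<mu> + d * \<mu> * \<sigma>2 + y * (1 + y) * (1 - a) * \<mu>"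
    unfolding \<sigma>2 \<mu> unfolding E3_def E2_def g h using assms(1-3)
    by (simp add: field_simps power2_eq_square power3_eq_cube)
  show "E4 - 4 * \<mu> * E3 + 6 * \<mu> ^ 2 * E2 - 3 * \<mu> ^ 4
      = 3 * (2 * d + 1) * \<sigma>2 ^ 2 + (4 * y * (1 + y) * (1 - a) + (1 + y - a * y) ^ 2) * \<sigma>2
        + y ^ 2 * (1 + y) * (1 - a ^ 2) * \<mu>"
    unfolding \<sigma>2 \<mu> unfolding E4_def E3_def E2_def g h using assms(1-3)
    by (simp add: field_simps power2_eq_square power3_eq_cube eval_nat_numeral)
qed

lemma TDL_base_deriv_at_1_values:
  fixes a b c d :: real
  assumes "c < 1"
  defines "x \<equiv> sgn a * b * d * (1 - c) powr a * a" and "y \<equiv> c / (1 - c)"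
  shows "TDL_base_deriv a b c d 0 1 = 1" and "TDL_base_deriv a b c d 1 1 = - x * y"
    and "TDL_base_deriv a b c d 2 1 = x * (a - 1) * y ^ 2"
    and "TDL_base_deriv a b c d 3 1 = - x * (a - 1) * (a - 2) * y ^ 3"
    and "TDL_base_deriv a b c d 4 1 = x * (a - 1) * (a - 2) * (a - 3) * y ^ 4"
  by (simp_all add: TDL_base_deriv_def[of _ _ _ _ 0] TDL_base_deriv_at_1[OF assms(1)] x_def y_def
      eval_nat_numeral pochhammer_Suc algebra_simps)

lemma TDL_moment_identities:
  fixes a c d x :: real and h :: "nat \<Rightarrow> real"
  assumes "0 < d" "0 < x" "0 < c" "c < 1" "a \<le> 1"
    and h: "h 0 = 1" "h 1 = - x * (c / (1 - c))" "h 2 = x * (a - 1) * (c / (1 - c)) ^ 2"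
      "h 3 = - x * (a - 1) * (a - 2) * (c / (1 - c)) ^ 3"
      "h 4 = x * (a - 1) * (a - 2) * (a - 3) * (c / (1 - c)) ^ 4"
  defines "g \<equiv> powr_higher_deriv (- 1 / d) h"
  defines "\<mu> \<equiv> g 1" and "E2 \<equiv> g 2 + g 1" and "E3 \<equiv> g 3 + 3 * g 2 + g 1"
    and "E4 \<equiv> g 4 + 6 * g 3 + 7 * g 2 + g 1"
  defines "\<sigma>2 \<equiv> E2 - \<mu> ^ 2"
  shows "0 < \<mu>" and "0 < \<sigma>2"
    and "E3 - 3 * \<mu> * E2 + 2 * \<mu> ^ 3 = \<sigma>2 ^ 2 / \<mu> + d * \<mu> * \<sigma>2 + c * (1 - a) * \<mu> / (1 - c) ^ 2"
    and "E4 - 4 * \<mu> * E3 + 6 * \<mu> ^ 2 * E2 - 3 * \<mu> ^ 4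
      = 3 * (2 * d + 1) * \<sigma>2 ^ 2 + (4 * c * (1 - a) + (1 - a * c) ^ 2) * \<sigma>2 / (1 - c) ^ 2
        + c ^ 2 * (1 - a ^ 2) * \<mu> / (1 - c) ^ 3"
proof -
  define y where "y = c / (1 - c)"
  have "0 < y" and c: "1 - c \<noteq> 0"
    using assms(3,4) by (simp_all add: y_def)
  note odds = TDL_moment_identities_in_odds[OF assms(1,2) \<open>0 < y\<close> assms(5) h[folded y_def],
      folded g_def, folded \<mu>_def E2_def E3_def E4_def, folded \<sigma>2_def]
  have one_plus_y: "1 + y = 1 / (1 - c)"
    using c by (simp add: y_def field_simps)
  have coeff_m3: "y * (1 + y) * (1 - a) = c * (1 - a) / (1 - c) ^ 2"
    unfolding one_plus_y by (simp add: y_def power2_eq_square)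
  have coeff_m4_\<sigma>: "4 * y * (1 + y) * (1 - a) + (1 + y - a * y) ^ 2
      = (4 * c * (1 - a) + (1 - a * c) ^ 2) / (1 - c) ^ 2"
  proof -
    have "1 + y - a * y = (1 - a * c) / (1 - c)"
      using c by (simp add: y_def field_simps)
    moreover have "4 * y * (1 + y) * (1 - a) = 4 * c * (1 - a) / (1 - c) ^ 2"
      unfolding one_plus_y by (simp add: y_def power2_eq_square)
    ultimately show ?thesis
      by (simp add: add_divide_distrib power_divide)
  qed
  have coeff_m4_\<mu>: "y ^ 2 * (1 + y) * (1 - a ^ 2) = c ^ 2 * (1 - a ^ 2) / (1 - c) ^ 3"
    unfolding one_plus_y by (simp add: y_def power2_eq_square power3_eq_cube power_divide)
  show "0 < \<mu>" "0 < \<sigma>2"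
    using odds(1,2) .
  show "E3 - 3 * \<mu> * E2 + 2 * \<mu> ^ 3 = \<sigma>2 ^ 2 / \<mu> + d * \<mu> * \<sigma>2 + c * (1 - a) * \<mu> / (1 - c) ^ 2"
    using odds(3) unfolding coeff_m3 by simp
  show "E4 - 4 * \<mu> * E3 + 6 * \<mu> ^ 2 * E2 - 3 * \<mu> ^ 4
      = 3 * (2 * d + 1) * \<sigma>2 ^ 2 + (4 * c * (1 - a) + (1 - a * c) ^ 2) * \<sigma>2 / (1 - c) ^ 2
        + c ^ 2 * (1 - a ^ 2) * \<mu> / (1 - c) ^ 3"
    using odds(4) unfolding coeff_m4_\<sigma> coeff_m4_\<mu> by simp
qed

lemma skewness_normalization:
  fixes v \<mu> d z w :: real
  assumes "0 < v" "0 < \<mu>"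
  shows "(v ^ 2 / \<mu> + d * \<mu> * v + z * \<mu> / w) / sqrt v ^ 3
    = (v / \<mu>) / sqrt v + d * sqrt v / (v / \<mu>) + z / (w * sqrt v * (v / \<mu>))"
proof -
  define t where "t = sqrt v"
  have t: "0 < t" "v = t ^ 2"
    using assms(1) by (simp_all add: t_def)
  have "v ^ 2 / \<mu> / t ^ 3 = (v / \<mu>) / t"
    using t assms(2) by (simp add: field_simps eval_nat_numeral)
  moreover have "d * \<mu> * v / t ^ 3 = d * t / (v / \<mu>)"
    using t assms(2) by (simp add: field_simps eval_nat_numeral)
  moreover have "z * \<mu> / w / t ^ 3 = z / (w * t * (v / \<mu>))"
    using t assms(2) by (cases "w = 0") (simp_all add: field_simps eval_nat_numeral)
  ultimately show ?thesis
    by (simp add: t_def[symmetric] add_divide_distrib)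
qed

lemma kurtosis_normalization:
  fixes v \<mu> d z z' w w' :: real
  assumes "0 < v" "0 < \<mu>"
  shows "(3 * (2 * d + 1) * v ^ 2 + z * v / w + z' * \<mu> / w') / sqrt v ^ 4
    = 3 * (2 * d + 1) + z / (w * v) + z' / (w' * v * (v / \<mu>))"
proof -
  have "sqrt v ^ 4 = v ^ 2"
    using assms(1) by (simp add: eval_nat_numeral)
  moreover have "z' * \<mu> / w' / v ^ 2 = z' / (w' * v * (v / \<mu>))"
    using assms by (simp add: power2_eq_square)
  ultimately show ?thesis
    using assms(1) by (simp add: add_divide_distrib power2_eq_square)
qed

theorem mainTheorem7:
  fixes P :: "nat pmf" and a b c d :: real
  assumes adm: "TDL_admissible a b c d"
    and law: "is_TDL P a b c d"
    and a0: "a \<noteq> 0"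
    and c0: "0 < c" and c1: "c < 1"
  defines "\<mu> \<equiv> measure_pmf.expectation P (\<lambda>k. real k)"
    and "\<sigma>2 \<equiv> measure_pmf.variance P (\<lambda>k. real k)"
    and "D \<equiv> measure_pmf.variance P (\<lambda>k. real k) / measure_pmf.expectation P (\<lambda>k. real k)"
    and "m3 \<equiv> measure_pmf.expectation P (\<lambda>k. (real k - measure_pmf.expectation P (\<lambda>k. real k)) ^ 3)"
    and "m4 \<equiv> measure_pmf.expectation P (\<lambda>k. (real k - measure_pmf.expectation P (\<lambda>k. real k)) ^ 4)"
  shows "integrable (measure_pmf P) (\<lambda>k. real k ^ 4)
    \<and> m3 = \<sigma>2 ^ 2 / \<mu> + d * \<mu> * \<sigma>2 + c * (1 - a) * \<mu> / (1 - c) ^ 2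
    \<and> m4 = 3 * (2 * d + 1) * \<sigma>2 ^ 2
              + (4 * c * (1 - a) + (1 - a * c) ^ 2) * \<sigma>2 / (1 - c) ^ 2
              + c ^ 2 * (1 - a ^ 2) * \<mu> / (1 - c) ^ 3
    \<and> m3 / sqrt \<sigma>2 ^ 3 = D / sqrt \<sigma>2 + d * sqrt \<sigma>2 / D
              + c * (1 - a) / ((1 - c) ^ 2 * sqrt \<sigma>2 * D)
    \<and> m4 / sqrt \<sigma>2 ^ 4 = 3 * (2 * d + 1)
              + (4 * c * (1 - a) + (1 - a * c) ^ 2) / ((1 - c) ^ 2 * \<sigma>2)
              + c ^ 2 * (1 - a ^ 2) / ((1 - c) ^ 3 * \<sigma>2 * D)"
proof -
  have "0 < d" "0 < b" "a \<le> 1"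
    using adm by (auto simp: TDL_admissible_def)
  define g where "g = powr_higher_deriv (- 1 / d) (\<lambda>i. TDL_base_deriv a b c d i 1)"
  have "(\<lambda>m. pmf P m * pochhammer (real m - real k + 1) k) sums g k" if "k \<le> 4" for k
    unfolding g_def using TDL_factorial_moment_sums[OF adm law c1 that] .
  note moments = pmf_nat_central_moments_of_factorial_moments[of P g, OF this]
  have "0 < sgn a * a"
    using a0 by (cases "0 < a") auto
  then have "0 < sgn a * a * (b * d) * (1 - c) powr a"
    using \<open>0 < b\<close> \<open>0 < d\<close> c1 by simp
  then have "0 < sgn a * b * d * (1 - c) powr a * a"
    by (simp add: algebra_simps)
  note identities = TDL_moment_identities[OF \<open>0 < d\<close> this c0 c1 \<open>a \<le> 1\<close>
      TDL_base_deriv_at_1_values[OF c1], folded g_def]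
  have closed_forms: "\<mu> = g 1" "\<sigma>2 = g 2 + g 1 - g 1 ^ 2" "D = \<sigma>2 / \<mu>"
      "m3 = \<sigma>2 ^ 2 / \<mu> + d * \<mu> * \<sigma>2 + c * (1 - a) * \<mu> / (1 - c) ^ 2"
      "m4 = 3 * (2 * d + 1) * \<sigma>2 ^ 2
        + (4 * c * (1 - a) + (1 - a * c) ^ 2) * \<sigma>2 / (1 - c) ^ 2
        + c ^ 2 * (1 - a ^ 2) * \<mu> / (1 - c) ^ 3"
    using moments identities by (simp_all add: \<mu>_def \<sigma>2_def D_def m3_def m4_def)
  moreover have "0 < \<sigma>2" "0 < \<mu>"
    using identities closed_forms by simp_all
  ultimately show ?thesis
    using moments(1) skewness_normalization kurtosis_normalization by simp
qed

end
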